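(* Let $\gamma$ be a three-mode CM satisfying $\gamma-i\tilde J_x\ge0$ for all $x\in\{0,A,B,C\}$. Then $\gamma$ is an edge CM if and only if $\gamma$ is not of the form $\gamma_A\oplus\gamma_B\oplus\gamma_C$ for one-mode CMs $\gamma_A,\gamma_B,\gamma_C$, and $K(\gamma)=\mathbb{R}^6$.
   Context: Conventions: Three modes $A,B,C$, phase-space vectors ordered mode-wise as $(q_A,p_A,q_B,p_B,q_C,p_C)$. $J_1=\begin{pmatrix}0&-1\\1&0\end{pmatrix}$, $J=J_1\oplus J_1\oplus J_1$. A CM of $n$ modes is a real symmetric $2n\times2n$ matrix $\gamma>0$ with $\gamma-iJ\ge0$. $X\ge Y$ means $X-Y$ is positive semidefinite. For $x\in\{A,B,C\}$, $\tilde J_x$ is $J$ with the $2\times2$ diagonal block of mode $x$ replaced by $-J_1$, and $\tilde J_0=J$. A three-mode CM is fully separable if there exist one-mode CMs $\gamma_A,\gamma_B,\gamma_C$ with $\gamma\ge\gamma_A\oplus\gamma_B\oplus\gamma_C$. Edge CM: a three-mode CM $\gamma$ that is not fully separable, satisfies $\gamma-i\tilde J_x\ge0$ for all $x\in\{0,A,B,C\}$, and such that for every real symmetric matrix $P\ge0$, $P\ne0$, the matrix $\gamma-P$ violates $\gamma-P-i\tilde J_x\ge0$ for some $x\in\{0,A,B,C\}$. $K(\gamma)\subseteq\mathbb{R}^6$: let $V\subseteq\mathbb{C}^6$ be the complex span of $\bigcup_{x\in\{0,A,B,C\}}\ker(\gamma-i\tilde J_x)$; $K(\gamma)$ is the real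 linear span of the real parts and imaginary parts of all vectors in $V$. *)

theory Defs
  imports "HOL-Analysis.Analysis"
begin

(* Phase-space index type 6 = {0,...,5}, ordered (q_A,p_A,q_B,p_B,q_C,p_C).
   Single-mode index type 2 = {0,1}, ordered (q,p). *)

definition symmetric_mat :: "real^'n^'n \<Rightarrow> bool" where
  "symmetric_mat M \<longleftrightarrow> transpose M = M"

definition psd_real :: "real^'n^'n \<Rightarrow> bool" where
  "psd_real M \<longleftrightarrow> symmetric_mat M \<and> (\<forall>x. 0 \<le> x \<bullet> (M *v x))"

definition pd_real :: "real^'n^'n \<Rightarrow> bool" where
  "pd_real M \<longleftrightarrow> symmetric_mat M \<and> (\<forall>x. x \<noteq> 0 \<longrightarrow> 0 < x \<bullet> (M *v x))"

definition hermitian_mat :: "complex^'n^'n \<Rightarrow> bool" where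
  "hermitian_mat M \<longleftrightarrow> (\<forall>i j. M $ j $ i = cnj (M $ i $ j))"

definition psd_complex :: "complex^'n^'n \<Rightarrow> bool" where
  "psd_complex M \<longleftrightarrow> hermitian_mat M \<and>
     (\<forall>v. 0 \<le> Re (\<Sum>i\<in>UNIV. cnj (v $ i) * (M *v v) $ i))"

definition minus_iJ :: "real^'n^'n \<Rightarrow> real^'n^'n \<Rightarrow> complex^'n^'n" where
  "minus_iJ X Y = (\<chi> i j. complex_of_real (X $ i $ j) - \<i> * complex_of_real (Y $ i $ j))"

definition is_CM :: "real^'n^'n \<Rightarrow> real^'n^'n \<Rightarrow> bool" where
  "is_CM Jm g \<longleftrightarrow> pd_real g \<and> psd_complex (minus_iJ g Jm)"

definition J1 :: "real^2^2" where
  "J1 = (\<chi> i j. if i = 0 \<and> j = 1 then -1 else if i = 1 \<and> j = 0 then 1 else 0)"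

definition one_mode_CM :: "real^2^2 \<Rightarrow> bool" where
  "one_mode_CM g \<longleftrightarrow> is_CM J1 g"

definition mode_of :: "6 \<Rightarrow> nat" where
  "mode_of i = (if i = 0 \<or> i = 1 then 0 else if i = 2 \<or> i = 3 then 1 else 2)"

definition pos_of :: "6 \<Rightarrow> 2" where
  "pos_of i = (if i = 0 \<or> i = 2 \<or> i = 4 then 0 else 1)"

definition dsum3 :: "real^2^2 \<Rightarrow> real^2^2 \<Rightarrow> real^2^2 \<Rightarrow> real^6^6" where
  "dsum3 a b c = (\<chi> i j. if mode_of i = mode_of j then
      (if mode_of i = 0 then a else if mode_of i = 1 then b else c) $ pos_of i $ pos_of j
    else 0)"

definition J3 :: "real^6^6" where
  "J3 = dsum3 J1 J1 J1"

definition three_mode_CM :: "real^6^6 \<Rightarrow> bool" where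
  "three_mode_CM g \<longleftrightarrow> is_CM J3 g"

datatype partyx = X0 | XA | XB | XC

fun Jt :: "partyx \<Rightarrow> real^6^6" where
  "Jt X0 = dsum3 J1 J1 J1"
| "Jt XA = dsum3 (- J1) J1 J1"
| "Jt XB = dsum3 J1 (- J1) J1"
| "Jt XC = dsum3 J1 J1 (- J1)"

definition fully_separable :: "real^6^6 \<Rightarrow> bool" where
  "fully_separable g \<longleftrightarrow> (\<exists>gA gB gC. one_mode_CM gA \<and> one_mode_CM gB \<and> one_mode_CM gC \<and>
      psd_real (g - dsum3 gA gB gC))"

definition edge_CM :: "real^6^6 \<Rightarrow> bool" where
  "edge_CM g \<longleftrightarrow> three_mode_CM g \<and> \<not> fully_separable g \<and>
     (\<forall>x. psd_complex (minus_iJ g (Jt x))) \<and>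
     (\<forall>P. symmetric_mat P \<and> psd_real P \<and> P \<noteq> 0 \<longrightarrow>
        (\<exists>x. \<not> psd_complex (minus_iJ (g - P) (Jt x))))"

definition ker_c :: "complex^'n^'n \<Rightarrow> (complex^'n) set" where
  "ker_c M = {v. M *v v = 0}"

definition re_vec :: "complex^'n \<Rightarrow> real^'n" where
  "re_vec v = (\<chi> i. Re (v $ i))"

definition im_vec :: "complex^'n \<Rightarrow> real^'n" where
  "im_vec v = (\<chi> i. Im (v $ i))"

definition V_space :: "real^6^6 \<Rightarrow> (complex^6) set" where
  "V_space g = vec.span (\<Union>x. ker_c (minus_iJ g (Jt x)))"

definition K_space :: "real^6^6 \<Rightarrow> (real^6) set" where
  "K_space g = span (re_vec ` V_space g \<union> im_vec ` V_space g)"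

end

theory Submission
  imports Defs
begin

(*
  A real P \<ge> 0 can be subtracted from \<gamma> keeping all four conditions
  \<gamma> - P - i J\<^sub>x \<ge> 0 only if v\<^sup>* P v \<le> v\<^sup>* (\<gamma> - i J\<^sub>x) v = 0 for every kernel vector v of
  \<gamma> - i J\<^sub>x, i.e. only if P annihilates V(\<gamma>) and hence, being real, annihilates K(\<gamma>).
  So K(\<gamma>) = \<real>\<^sup>6 forbids any nonzero P. Conversely, if w \<noteq> 0 is orthogonal to K(\<gamma>), the
  functional v \<mapsto> w\<^sup>T v vanishes on every kernel, and since a PSD form is coercive on the
  orthogonal complement of its kernel, e w w\<^sup>T is dominated by each \<gamma> - i J\<^sub>x for small e > 0.
  Finally, product states satisfy all four conditions, so when K(\<gamma>) = \<real>\<^sup>6 a product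
  lower bound \<gamma> \<ge> \<gamma>\<^sub>A \<oplus> \<gamma>\<^sub>B \<oplus> \<gamma>\<^sub>C must be an equality: full separability then
  means being a product.
*)

definition sesq :: "complex^'n^'n \<Rightarrow> complex^'n \<Rightarrow> complex^'n \<Rightarrow> complex" where
  "sesq M u v = (\<Sum>i\<in>UNIV. cnj (u $ i) * (M *v v) $ i)"

lemma psd_complex_iff_sesq:
  "psd_complex M \<longleftrightarrow> hermitian_mat M \<and> (\<forall>v. 0 \<le> Re (sesq M v v))"
  by (simp add: psd_complex_def sesq_def)

lemma sesq_add_left: "sesq M (u + u') v = sesq M u v + sesq M u' v"
  by (simp add: sesq_def distrib_right sum.distrib)

lemma sesq_add_right: "sesq M u (v + v') = sesq M u v + sesq M u v'"
  by (simp add: sesq_def matrix_vector_right_distrib distrib_left sum.distrib)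

lemma sesq_scaleR_left: "sesq M (t *\<^sub>R u) v = of_real t * sesq M u v"
  by (simp add: sesq_def scaleR_conv_of_real[of t "u $ i" for i] sum_distrib_left mult_ac)

lemma sesq_scaleR_right: "sesq M u (t *\<^sub>R v) = of_real t * sesq M u v"
  by (simp add: sesq_def matrix_vector_mult_def scaleR_conv_of_real[of t "v $ i" for i]
      sum_distrib_left mult_ac)

lemma sesq_diff_matrix: "sesq (A - B) u v = sesq A u v - sesq B u v"
  by (simp add: sesq_def matrix_vector_mult_diff_rdistrib right_diff_distrib sum_subtractf)

lemma sesq_kernel_right: "M *v v = 0 \<Longrightarrow> sesq M u v = 0"
  by (simp add: sesq_def)

lemma hermitian_matD: "hermitian_mat M \<Longrightarrow> cnj (M $ i $ j) = M $ j $ i"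
  unfolding hermitian_mat_def by (metis complex_cnj_cnj)

lemma sesq_swap:
  assumes "hermitian_mat M"
  shows "sesq M u v = cnj (sesq M v u)"
proof -
  have "cnj (sesq M v u) = (\<Sum>i\<in>UNIV. \<Sum>j\<in>UNIV. v $ i * M $ j $ i * cnj (u $ j))"
    by (simp add: sesq_def matrix_vector_mult_def cnj_sum sum_distrib_left
        hermitian_matD[OF assms] mult_ac)
  also have "\<dots> = sesq M u v"
    by (subst sum.swap) (simp add: sesq_def matrix_vector_mult_def sum_distrib_left mult_ac)
  finally show ?thesis by simp
qed

lemma sum_cnj_mult_self: "(\<Sum>i\<in>UNIV. cnj (u $ i) * u $ i) = of_real ((norm u)\<^sup>2)"
proof -
  have "(norm u)\<^sup>2 = (\<Sum>i\<in>UNIV. (norm (u $ i))\<^sup>2)"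
    unfolding norm_vec_def L2_set_def by (simp add: sum_nonneg)
  then have "of_real ((norm u)\<^sup>2) = (\<Sum>i\<in>UNIV. of_real ((norm (u $ i))\<^sup>2) :: complex)"
    by (metis of_real_sum)
  also have "\<dots> = (\<Sum>i\<in>UNIV. u $ i * cnj (u $ i))"
    by (simp only: complex_norm_square)
  finally show ?thesis
    by (simp add: mult.commute)
qed

lemma sesq_image_self: "sesq M (M *v v) v = of_real ((norm (M *v v))\<^sup>2)"
  by (simp add: sesq_def sum_cnj_mult_self)

lemma continuous_on_sesq_diag: "continuous_on T (\<lambda>v. Re (sesq M v v))"
  unfolding sesq_def matrix_vector_mult_def by (intro continuous_intros)

lemma linear_coeff_zero_if_quadratic_nonneg:
  fixes a b :: real
  assumes "\<And>s. 0 \<le> a * s + b * s\<^sup>2"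
  shows "a = 0"
proof -
  define c where "c = \<bar>b\<bar> + 1"
  define s where "s = - a / c"
  have "c > 0" "b < c" by (auto simp: c_def)
  then have a: "a = - s * c" by (simp add: s_def)
  have "0 \<le> s\<^sup>2 * (b - c)"
    using assms[of s] by (simp add: a power2_eq_square algebra_simps)
  moreover have "s\<^sup>2 * (b - c) < 0" if "s \<noteq> 0"
    using that \<open>b < c\<close> by (simp add: mult_pos_neg)
  ultimately show ?thesis
    using a by fastforce
qed

lemma psd_complex_kernel_if_sesq_zero:
  assumes psd: "psd_complex M" and zero: "Re (sesq M v v) = 0"
  shows "M *v v = 0"
proof -
  let ?u = "M *v v"
  have herm: "hermitian_mat M" and nonneg: "\<And>x. 0 \<le> Re (sesq M x x)"
    using psd by (auto simp: psd_complex_iff_sesq)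
  have vu: "sesq M v ?u = of_real ((norm ?u)\<^sup>2)"
    using sesq_swap[OF herm, of v ?u] by (simp add: sesq_image_self)
  have expand: "Re (sesq M (v + s *\<^sub>R ?u) (v + s *\<^sub>R ?u))
          = 2 * (norm ?u)\<^sup>2 * s + Re (sesq M ?u ?u) * s\<^sup>2" for s
    using zero
    by (simp add: sesq_add_left sesq_add_right sesq_scaleR_left sesq_scaleR_right
        sesq_image_self vu power2_eq_square) (simp add: algebra_simps)
  have "0 \<le> 2 * (norm ?u)\<^sup>2 * s + Re (sesq M ?u ?u) * s\<^sup>2" for s
    using nonneg[of "v + s *\<^sub>R ?u"] by (simp only: expand)
  then have "2 * (norm ?u)\<^sup>2 = 0"
    by (rule linear_coeff_zero_if_quadratic_nonneg)
  then show ?thesis by simp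
qed

lemma hermitian_mat_diff:
  assumes "hermitian_mat A" "hermitian_mat B"
  shows "hermitian_mat (A - B)"
  unfolding hermitian_mat_def by (simp add: hermitian_matD[OF assms(1)] hermitian_matD[OF assms(2)])

lemma psd_complex_kernel_mono:
  assumes "psd_complex A" "psd_complex (M - A)" "M *v v = 0"
  shows "A *v v = 0"
proof -
  have "0 \<le> Re (sesq A v v)" "0 \<le> Re (sesq (M - A) v v)"
    using assms(1,2) by (auto simp: psd_complex_iff_sesq)
  then have "Re (sesq A v v) = 0"
    using sesq_kernel_right[OF assms(3)] by (simp add: sesq_diff_matrix)
  then show ?thesis
    by (rule psd_complex_kernel_if_sesq_zero[OF assms(1)])
qed

definition cnj_mat :: "complex^'n^'n \<Rightarrow> complex^'n^'n" where
  "cnj_mat M = (\<chi> i j. cnj (M $ i $ j))"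

lemma psd_complex_cnj_mat:
  assumes "psd_complex M"
  shows "psd_complex (cnj_mat M)"
proof -
  have herm: "hermitian_mat M"
    using assms by (simp add: psd_complex_iff_sesq)
  have "sesq (cnj_mat M) v v = cnj (sesq M (\<chi> i. cnj (v $ i)) (\<chi> i. cnj (v $ i)))" for v
    by (simp add: sesq_def cnj_mat_def matrix_vector_mult_def cnj_sum)
  moreover have "hermitian_mat (cnj_mat M)"
    unfolding hermitian_mat_def cnj_mat_def by (simp add: hermitian_matD[OF herm])
  ultimately show ?thesis
    using assms by (simp add: psd_complex_iff_sesq)
qed

definition cmat :: "real^'n^'n \<Rightarrow> complex^'n^'n" where
  "cmat P = (\<chi> i j. of_real (P $ i $ j))"

lemma minus_iJ_diff: "minus_iJ (g - P) J = minus_iJ g J - cmat P"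
  by (simp add: minus_iJ_def cmat_def vec_eq_iff)

lemma re_vec_cmat: "re_vec (cmat P *v v) = P *v re_vec v"
  by (simp add: cmat_def re_vec_def matrix_vector_mult_def vec_eq_iff Re_sum)

lemma im_vec_cmat: "im_vec (cmat P *v v) = P *v im_vec v"
  by (simp add: cmat_def im_vec_def matrix_vector_mult_def vec_eq_iff Im_sum)

lemma Re_sesq_cmat:
  "Re (sesq (cmat P) v v) = re_vec v \<bullet> (P *v re_vec v) + im_vec v \<bullet> (P *v im_vec v)"
proof -
  have "Re ((cmat P *v v) $ i) = (P *v re_vec v) $ i" "Im ((cmat P *v v) $ i) = (P *v im_vec v) $ i"
    for i
    by (simp_all add: cmat_def re_vec_def im_vec_def matrix_vector_mult_def Re_sum Im_sum)
  then show ?thesis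
    by (simp add: sesq_def inner_vec_def Re_sum sum.distrib re_vec_def im_vec_def)
qed

lemma hermitian_cmat: "symmetric_mat P \<Longrightarrow> hermitian_mat (cmat P)"
  unfolding hermitian_mat_def by (simp add: symmetric_mat_def cmat_def transpose_def vec_eq_iff)

lemma psd_complex_cmat: "psd_real P \<Longrightarrow> psd_complex (cmat P)"
  by (simp add: psd_complex_iff_sesq psd_real_def hermitian_cmat Re_sesq_cmat add_nonneg_nonneg)

lemma psd_complex_diff_cmat:
  assumes "psd_complex M" "symmetric_mat P"
    and "\<And>v. Re (sesq (cmat P) v v) \<le> Re (sesq M v v)"
  shows "psd_complex (M - cmat P)"
  using assms by (simp add: psd_complex_iff_sesq hermitian_mat_diff hermitian_cmat sesq_diff_matrix)

lemma compact_positive_lower_bound: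
  fixes f :: "'a::topological_space \<Rightarrow> real"
  assumes "compact T" "continuous_on T f" "\<And>z. z \<in> T \<Longrightarrow> 0 < f z"
  obtains c where "c > 0" "\<And>z. z \<in> T \<Longrightarrow> c \<le> f z"
proof (cases "T = {}")
  case True
  then show ?thesis
    using that[of 1] by simp
next
  case False
  then obtain z0 where "z0 \<in> T" "\<forall>z\<in>T. f z0 \<le> f z"
    using continuous_attains_inf[OF assms(1) False assms(2)] by blast
  then show ?thesis
    using that assms(3) by blast
qed

lemma subspace_kernel_matrix: "subspace {v :: 'a::real_algebra_1^'n. M *v v = 0}"
  unfolding subspace_def
  by (simp add: matrix_vector_right_distrib linear_cmul[OF matrix_vector_mul_linear])

lemma psd_complex_coercive:
  assumes psd: "psd_complex M"
  obtains c where "c > 0"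
    and "\<And>z. (\<And>a. M *v a = 0 \<Longrightarrow> a \<bullet> z = 0) \<Longrightarrow> c * (norm z)\<^sup>2 \<le> Re (sesq M z z)"
proof -
  define T where "T = {z. norm z = 1 \<and> (\<forall>a. M *v a = 0 \<longrightarrow> a \<bullet> z = 0)}"
  have "T = sphere 0 1 \<inter> (\<Inter>a\<in>{a. M *v a = 0}. {z. a \<bullet> z = 0})"
    by (auto simp: T_def)
  then have "compact T"
    by (simp add: compact_Int_closed closed_INT closed_hyperplane)
  moreover have "0 < Re (sesq M z z)" if "z \<in> T" for z
  proof -
    have "Re (sesq M z z) \<noteq> 0"
    proof
      assume "Re (sesq M z z) = 0"
      then have "M *v z = 0"
        by (rule psd_complex_kernel_if_sesq_zero[OF psd])
      then have "z \<bullet> z = 0"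
        using that by (simp add: T_def)
      then show False
        using that by (simp add: T_def)
    qed
    moreover have "0 \<le> Re (sesq M z z)"
      using psd by (simp add: psd_complex_iff_sesq)
    ultimately show ?thesis by linarith
  qed
  ultimately obtain c where "c > 0" and c: "\<And>z. z \<in> T \<Longrightarrow> c \<le> Re (sesq M z z)"
    using compact_positive_lower_bound[OF _ continuous_on_sesq_diag] by blast
  show thesis
  proof (rule that[OF \<open>c > 0\<close>])
    fix z
    assume orth: "\<And>a. M *v a = 0 \<Longrightarrow> a \<bullet> z = 0"
    show "c * (norm z)\<^sup>2 \<le> Re (sesq M z z)"
    proof (cases "z = 0")
      case True
      then show ?thesis by (simp add: sesq_def)
    next
      case False
      then have "(1 / norm z) *\<^sub>R z \<in> T"
        using orth by (simp add: T_def)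
      then have "c \<le> Re (sesq M ((1 / norm z) *\<^sub>R z) ((1 / norm z) *\<^sub>R z))"
        by (rule c)
      also have "\<dots> = Re (sesq M z z) / (norm z)\<^sup>2"
        by (simp add: sesq_scaleR_left sesq_scaleR_right power2_eq_square)
      finally show ?thesis
        using False by (simp add: field_simps)
    qed
  qed
qed

definition rdot :: "real^'n \<Rightarrow> complex^'n \<Rightarrow> complex" where
  "rdot w v = (\<Sum>i\<in>UNIV. of_real (w $ i) * v $ i)"

lemma rdot_eq_Complex: "rdot w v = Complex (w \<bullet> re_vec v) (w \<bullet> im_vec v)"
  by (simp add: rdot_def complex_eq_iff inner_vec_def re_vec_def im_vec_def Re_sum Im_sum)

lemma rdot_add: "rdot w (u + v) = rdot w u + rdot w v"
  by (simp add: rdot_def distrib_left sum.distrib)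

lemma norm_rdot_le: "cmod (rdot w v) \<le> norm w * norm v"
proof -
  have "cmod (rdot w v) \<le> (\<Sum>i\<in>UNIV. \<bar>norm (w $ i)\<bar> * \<bar>norm (v $ i)\<bar>)"
    unfolding rdot_def by (rule order_trans[OF norm_sum]) (simp add: norm_mult)
  also have "\<dots> \<le> L2_set (\<lambda>i. norm (w $ i)) UNIV * L2_set (\<lambda>i. norm (v $ i)) UNIV"
    by (rule L2_set_mult_ineq)
  finally show ?thesis
    by (simp add: norm_vec_def)
qed

lemma psd_complex_dominates_rank_one:
  assumes psd: "psd_complex M" and ker: "\<And>v. M *v v = 0 \<Longrightarrow> rdot w v = 0"
  shows "\<exists>e>0. \<forall>v. e * (cmod (rdot w v))\<^sup>2 \<le> Re (sesq M v v)"
proof -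
  obtain c where "c > 0"
    and coercive: "\<And>z. (\<And>a. M *v a = 0 \<Longrightarrow> a \<bullet> z = 0) \<Longrightarrow> c * (norm z)\<^sup>2 \<le> Re (sesq M z z)"
    using psd_complex_coercive[OF psd] by blast
  define e where "e = c / ((norm w)\<^sup>2 + 1)"
  have "e > 0"
    using \<open>c > 0\<close> by (simp add: e_def add_nonneg_pos)
  moreover have "e * (cmod (rdot w v))\<^sup>2 \<le> Re (sesq M v v)" for v
  proof -
    let ?N = "{a. M *v a = 0}"
    obtain y z where "y \<in> span ?N" and z: "\<And>a. a \<in> span ?N \<Longrightarrow> orthogonal z a" and v: "v = y + z"
      by (rule orthogonal_subspace_decomp_exists[of ?N v]) blast
    have y: "M *v y = 0"
      using \<open>y \<in> span ?N\<close> span_eq_iff[THEN iffD2, OF subspace_kernel_matrix] by blast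
    have "sesq M z y = 0" "sesq M y y = 0"
      using y by (simp_all add: sesq_kernel_right)
    moreover have "hermitian_mat M"
      using psd by (simp add: psd_complex_iff_sesq)
    ultimately have sesq_v: "sesq M v v = sesq M z z"
      using sesq_swap[of M y z] by (simp add: v sesq_add_left sesq_add_right)
    have orth: "a \<bullet> z = 0" if "M *v a = 0" for a
      using z[OF span_base] that by (simp add: orthogonal_def inner_commute)
    have coercive_z: "c * (norm z)\<^sup>2 \<le> Re (sesq M v v)"
      using coercive[OF orth] by (simp add: sesq_v)
    have rdot_z: "cmod (rdot w v) \<le> norm w * norm z"
      using norm_rdot_le[of w z] ker[OF y] by (simp add: v rdot_add)
    have "e * (norm w)\<^sup>2 \<le> c"
      using \<open>c > 0\<close> by (simp add: e_def pos_divide_le_eq add_nonneg_pos)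
    have "e * (cmod (rdot w v))\<^sup>2 \<le> e * (norm w)\<^sup>2 * (norm z)\<^sup>2"
      using rdot_z \<open>e > 0\<close> by (simp add: power_mono power_mult_distrib[symmetric])
    also have "\<dots> \<le> c * (norm z)\<^sup>2"
      using \<open>e * (norm w)\<^sup>2 \<le> c\<close> by (simp add: mult_right_mono)
    also have "\<dots> \<le> Re (sesq M v v)"
      by (rule coercive_z)
    finally show ?thesis .
  qed
  ultimately show ?thesis by blast
qed

definition rank_one :: "real \<Rightarrow> real^'n \<Rightarrow> real^'n^'n" where
  "rank_one e w = (\<chi> i j. e * w $ i * w $ j)"

lemma symmetric_rank_one: "symmetric_mat (rank_one e w)"
  by (simp add: symmetric_mat_def rank_one_def transpose_def vec_eq_iff mult_ac)

lemma psd_real_rank_one: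
  assumes "0 \<le> e"
  shows "psd_real (rank_one e w)"
proof -
  have "x \<bullet> (rank_one e w *v x) = e * (w \<bullet> x)\<^sup>2" for x
    by (simp add: rank_one_def inner_vec_def matrix_vector_mult_def power2_eq_square
        sum_product sum_distrib_left mult_ac)
  then show ?thesis
    using assms by (simp add: psd_real_def symmetric_rank_one)
qed

lemma rank_one_neq_0: "e \<noteq> 0 \<Longrightarrow> w \<noteq> 0 \<Longrightarrow> rank_one e w \<noteq> 0"
  by (auto simp: rank_one_def vec_eq_iff)

lemma sesq_cmat_rank_one: "sesq (cmat (rank_one e w)) v v = of_real (e * (cmod (rdot w v))\<^sup>2)"
proof -
  have "sesq (cmat (rank_one e w)) v v = of_real e * (cnj (rdot w v) * rdot w v)"
    by (simp add: sesq_def cmat_def rank_one_def rdot_def matrix_vector_mult_def cnj_sum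
        sum_product sum_distrib_left mult_ac)
  also have "\<dots> = of_real (e * (cmod (rdot w v))\<^sup>2)"
    by (simp only: of_real_mult complex_norm_square mult.commute)
  finally show ?thesis .
qed

lemma exhaust_6:
  fixes i :: 6
  shows "i = 0 \<or> i = 1 \<or> i = 2 \<or> i = 3 \<or> i = 4 \<or> i = 5"
proof (induct i)
  case (of_int z)
  then have "z = 0 \<or> z = 1 \<or> z = 2 \<or> z = 3 \<or> z = 4 \<or> z = 5"
    by fastforce
  then show ?case by auto
qed

lemma exhaust_2_zero_one:
  fixes p :: 2
  shows "p = 0 \<or> p = 1"
proof (induct p)
  case (of_int z)
  then have "z = 0 \<or> z = 1"
    by fastforce
  then show ?case by auto
qed

lemma sum_UNIV_6: "sum f (UNIV :: 6 set) = f 0 + f 1 + f 2 + f 3 + f 4 + f 5"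
proof -
  have UNIV_6: "(UNIV :: 6 set) = {0, 1, 2, 3, 4, 5}"
    using exhaust_6 by auto
  show ?thesis
    unfolding UNIV_6 by (simp add: ac_simps)
qed

lemma sum_UNIV_2: "sum f (UNIV :: 2 set) = f 0 + f 1"
proof -
  have UNIV_2: "(UNIV :: 2 set) = {0, 1}"
    using exhaust_2_zero_one by auto
  show ?thesis
    unfolding UNIV_2 by simp
qed

definition restrict_mode :: "nat \<Rightarrow> complex^6 \<Rightarrow> complex^2" where
  "restrict_mode k v = (\<chi> p. if p = 0 then v $ of_nat (2 * k) else v $ of_nat (2 * k + 1))"

lemma sesq_minus_iJ_dsum3:
  "sesq (minus_iJ (dsum3 a b c) (dsum3 a' b' c')) v v =
     sesq (minus_iJ a a') (restrict_mode 0 v) (restrict_mode 0 v)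
   + sesq (minus_iJ b b') (restrict_mode 1 v) (restrict_mode 1 v)
   + sesq (minus_iJ c c') (restrict_mode 2 v) (restrict_mode 2 v)"
  unfolding sesq_def matrix_vector_mult_def sum_UNIV_6 sum_UNIV_2 minus_iJ_def dsum3_def
    mode_of_def pos_of_def restrict_mode_def
  by (simp add: algebra_simps)

lemma hermitian_minus_iJ_iff:
  "hermitian_mat (minus_iJ g J) \<longleftrightarrow> transpose g = g \<and> transpose J = - J"
proof -
  have entry: "minus_iJ g J $ j $ i = cnj (minus_iJ g J $ i $ j)
          \<longleftrightarrow> g $ j $ i = g $ i $ j \<and> J $ i $ j = - J $ j $ i" for i j
    by (auto simp: minus_iJ_def complex_eq_iff)
  show ?thesis
    unfolding hermitian_mat_def entry transpose_def vec_eq_iff vector_uminus_component vec_lambda_beta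
    by blast
qed

lemma transpose_dsum3: "transpose (dsum3 a b c) = dsum3 (transpose a) (transpose b) (transpose c)"
  unfolding transpose_def dsum3_def vec_eq_iff by simp

lemma dsum3_uminus: "dsum3 (- a) (- b) (- c) = - dsum3 a b c"
  by (simp add: dsum3_def vec_eq_iff)

lemma psd_complex_minus_iJ_dsum3:
  assumes "psd_complex (minus_iJ a a')" "psd_complex (minus_iJ b b')" "psd_complex (minus_iJ c c')"
  shows "psd_complex (minus_iJ (dsum3 a b c) (dsum3 a' b' c'))"
proof -
  have nonneg: "0 \<le> Re (sesq (minus_iJ x x') u u)" if "psd_complex (minus_iJ x x')" for x x' u
    using that by (simp add: psd_complex_iff_sesq)
  have "hermitian_mat (minus_iJ (dsum3 a b c) (dsum3 a' b' c'))"
    using assms by (simp add: psd_complex_iff_sesq hermitian_minus_iJ_iff transpose_dsum3 dsum3_uminus)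
  moreover have "0 \<le> Re (sesq (minus_iJ (dsum3 a b c) (dsum3 a' b' c')) v v)" for v
    unfolding sesq_minus_iJ_dsum3 plus_complex.sel by (intro add_nonneg_nonneg nonneg assms)
  ultimately show ?thesis
    by (simp add: psd_complex_iff_sesq)
qed

lemma minus_iJ_uminus: "minus_iJ g (- J) = cnj_mat (minus_iJ g J)"
  by (simp add: minus_iJ_def cnj_mat_def vec_eq_iff)

lemma psd_complex_Jt_product:
  assumes "one_mode_CM gA" "one_mode_CM gB" "one_mode_CM gC"
  shows "psd_complex (minus_iJ (dsum3 gA gB gC) (Jt x))"
proof -
  have "psd_complex (minus_iJ g J1)" "psd_complex (minus_iJ g (- J1))" if "one_mode_CM g" for g
    using that psd_complex_cnj_mat by (auto simp: one_mode_CM_def is_CM_def minus_iJ_uminus)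
  then show ?thesis
    using assms by (cases x) (simp_all add: psd_complex_minus_iJ_dsum3)
qed

lemma K_space_UNIV_imp_eq_0:
  assumes K: "K_space g = UNIV" and P: "psd_real P"
    and PPT: "\<And>x. psd_complex (minus_iJ (g - P) (Jt x))"
  shows "P = 0"
proof -
  have "cmat P *v v = 0" if "minus_iJ g (Jt x) *v v = 0" for v x
    using psd_complex_kernel_mono[OF psd_complex_cmat[OF P] _ that] PPT[of x]
    by (simp add: minus_iJ_diff)
  then have V: "V_space g \<subseteq> {v. cmat P *v v = 0}"
    unfolding V_space_def ker_c_def by (intro vec.span_minimal vec.subspace_kernel) auto
  have "re_vec 0 = 0" "im_vec 0 = 0"
    by (simp_all add: re_vec_def im_vec_def vec_eq_iff)
  then have "P *v re_vec v = 0" "P *v im_vec v = 0" if "v \<in> V_space g" for v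
    using V that by (auto simp flip: re_vec_cmat im_vec_cmat)
  then have "K_space g \<subseteq> {x. P *v x = 0}"
    unfolding K_space_def by (intro span_minimal subspace_kernel_matrix) auto
  then show "P = 0"
    using K by (auto simp: matrix_eq)
qed

lemma exists_subtractable_if_K_space_neq_UNIV:
  assumes PPT: "\<And>x. psd_complex (minus_iJ g (Jt x))" and K: "K_space g \<noteq> UNIV"
  obtains P where "symmetric_mat P" "psd_real P" "P \<noteq> 0"
    "\<And>x. psd_complex (minus_iJ (g - P) (Jt x))"
proof -
  obtain w where "w \<noteq> 0" and w: "\<And>y. y \<in> K_space g \<Longrightarrow> orthogonal w y"
    using orthogonal_to_subspace_exists_gen[of "re_vec ` V_space g \<union> im_vec ` V_space g" UNIV] K
    unfolding K_space_def by (auto simp: psubset_eq)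
  have ker: "rdot w v = 0" if "minus_iJ g (Jt x) *v v = 0" for x v
  proof -
    have "v \<in> V_space g"
      using that unfolding V_space_def ker_c_def by (intro vec.span_base) auto
    then have "re_vec v \<in> K_space g" "im_vec v \<in> K_space g"
      unfolding K_space_def by (auto intro: span_base)
    then show ?thesis
      using w by (simp add: rdot_eq_Complex orthogonal_def complex_eq_iff)
  qed
  have "\<exists>e>0. \<forall>v. e * (cmod (rdot w v))\<^sup>2 \<le> Re (sesq (minus_iJ g (Jt x)) v v)" for x
    by (rule psd_complex_dominates_rank_one[OF PPT ker])
  then obtain ex where ex_pos: "\<And>x. ex x > 0"
    and ex_le: "\<And>x v. ex x * (cmod (rdot w v))\<^sup>2 \<le> Re (sesq (minus_iJ g (Jt x)) v v)"
    by metis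
  define e where "e = min (min (ex X0) (ex XA)) (min (ex XB) (ex XC))"
  have "e > 0"
    using ex_pos by (simp add: e_def)
  have e_le: "e \<le> ex x" for x
    by (cases x) (auto simp: e_def)
  show thesis
  proof (rule that)
    show "symmetric_mat (rank_one e w)" "psd_real (rank_one e w)" "rank_one e w \<noteq> 0"
      using \<open>e > 0\<close> \<open>w \<noteq> 0\<close> by (simp_all add: symmetric_rank_one psd_real_rank_one rank_one_neq_0)
    fix x
    show "psd_complex (minus_iJ (g - rank_one e w) (Jt x))"
      unfolding minus_iJ_diff
    proof (rule psd_complex_diff_cmat[OF PPT symmetric_rank_one])
      fix v
      have "e * (cmod (rdot w v))\<^sup>2 \<le> ex x * (cmod (rdot w v))\<^sup>2"
        by (simp add: e_le mult_right_mono)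
      also have "\<dots> \<le> Re (sesq (minus_iJ g (Jt x)) v v)"
        by (rule ex_le)
      finally show "Re (sesq (cmat (rank_one e w)) v v) \<le> Re (sesq (minus_iJ g (Jt x)) v v)"
        by (simp add: sesq_cmat_rank_one)
    qed
  qed
qed

lemma K_space_UNIV_iff_no_subtractable:
  assumes "\<And>x. psd_complex (minus_iJ g (Jt x))"
  shows "K_space g = UNIV \<longleftrightarrow>
    (\<forall>P. symmetric_mat P \<and> psd_real P \<and> P \<noteq> 0 \<longrightarrow> (\<exists>x. \<not> psd_complex (minus_iJ (g - P) (Jt x))))"
  using K_space_UNIV_imp_eq_0 exists_subtractable_if_K_space_neq_UNIV[OF assms] by metis

lemma fully_separable_iff_product:
  assumes "K_space g = UNIV"
  shows "fully_separable g \<longleftrightarrow>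
    (\<exists>gA gB gC. one_mode_CM gA \<and> one_mode_CM gB \<and> one_mode_CM gC \<and> g = dsum3 gA gB gC)"
proof
  assume "fully_separable g"
  then obtain gA gB gC where modes: "one_mode_CM gA" "one_mode_CM gB" "one_mode_CM gC"
    and "psd_real (g - dsum3 gA gB gC)"
    unfolding fully_separable_def by blast
  moreover have "psd_complex (minus_iJ (g - (g - dsum3 gA gB gC)) (Jt x))" for x
    using psd_complex_Jt_product[OF modes] by simp
  ultimately have "g - dsum3 gA gB gC = 0"
    using K_space_UNIV_imp_eq_0[OF assms] by blast
  then show "\<exists>gA gB gC. one_mode_CM gA \<and> one_mode_CM gB \<and> one_mode_CM gC \<and> g = dsum3 gA gB gC"
    using modes by auto
next
  assume "\<exists>gA gB gC. one_mode_CM gA \<and> one_mode_CM gB \<and> one_mode_CM gC \<and> g = dsum3 gA gB gC"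
  moreover have "psd_real (0 :: real^6^6)"
    by (simp add: psd_real_def symmetric_mat_def transpose_def vec_eq_iff)
  ultimately show "fully_separable g"
    unfolding fully_separable_def by force
qed

theorem theorem4:
  fixes g :: "real^6^6"
  assumes "three_mode_CM g"
    and "\<forall>x. psd_complex (minus_iJ g (Jt x))"
  shows "edge_CM g \<longleftrightarrow>
    ((\<not> (\<exists>gA gB gC. one_mode_CM gA \<and> one_mode_CM gB \<and> one_mode_CM gC \<and> g = dsum3 gA gB gC))
     \<and> K_space g = UNIV)"
proof -
  have "K_space g = UNIV \<longleftrightarrow>
    (\<forall>P. symmetric_mat P \<and> psd_real P \<and> P \<noteq> 0 \<longrightarrow> (\<exists>x. \<not> psd_complex (minus_iJ (g - P) (Jt x))))"
    using assms(2) by (intro K_space_UNIV_iff_no_subtractable) blast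
  then show ?thesis
    unfolding edge_CM_def using assms fully_separable_iff_product by blast
qed

end
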